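(* Let $\ell$ and $n$ be positive integers. For each positive integer $\ell'$, let $O_{n,\ell'}(\mathbb{Q})$ denote the set of $n\times n$ rational orthogonal matrices of level $\ell'$. Then $$\sum_{\ell'\mid \ell}\big|O_{n,\ell'}(\mathbb{Q})\big|\le (2n)^{\ell^2 n}.$$
   Context: A rational orthogonal matrix is an $n\times n$ matrix $Q$ with rational entries and $Q^\top Q=I$. The level of a rational matrix $M$ is the smallest positive integer $\ell$ such that $\ell M$ has integer entries. The sum ranges over all positive divisors $\ell'$ of $\ell$. *)

theory Defs
  imports "HOL-Analysis.Analysis"
begin

text \<open>Rational n x n matrices are modelled as rat^'n^'n, with n = CARD('n).\<close>

definition rat_orthogonal :: "rat^'n^'n \<Rightarrow> bool" where
  "rat_orthogonal Q \<longleftrightarrow> transpose Q ** Q = mat 1"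

definition is_integral_matrix :: "rat^'n^'n \<Rightarrow> bool" where
  "is_integral_matrix M \<longleftrightarrow> (\<forall>i j. M $ i $ j \<in> \<int>)"

definition level :: "rat^'n^'n \<Rightarrow> nat" where
  "level M = (LEAST l::nat. 0 < l \<and> is_integral_matrix (\<chi> i j. of_nat l * M $ i $ j))"

definition orth_level_set :: "nat \<Rightarrow> (rat^'n^'n) set" where
  "orth_level_set l' = {Q. rat_orthogonal Q \<and> level Q = l'}"

end

theory Submission
  imports Defs "HOL-Library.Discrete_Functions"
begin

text \<open>
  If the level of a rational orthogonal matrix \<open>Q\<close> divides \<open>l\<close>, then \<open>l Q\<close> is an integer
  matrix each of whose columns \<open>v\<close> satisfies \<open>\<Sum>\<^sub>i v\<^sub>i\<^sup>2 = l\<^sup>2\<close>, and \<open>Q\<close> is determined by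
  these columns. So it suffices to count integer vectors \<open>v \<in> \<int>\<^sup>n\<close> with \<open>\<Sum>\<^sub>i v\<^sub>i\<^sup>2 = m\<close>:
  each is decoded from a word of length \<open>m\<close> over the \<open>2n\<close> letters \<open>(i, \<plusminus>)\<close>, by letting
  \<open>v\<^sub>i\<^sup>2\<close> be the number of letters naming \<open>i\<close> and reading the sign of \<open>v\<^sub>i\<close> off these
  letters, so there are at most \<open>(2n)\<^sup>m\<close> of them.
\<close>

definition int_sphere :: "nat \<Rightarrow> ('a::finite \<Rightarrow> int) set" where
  "int_sphere m = {v. (\<Sum>i\<in>UNIV. (v i)^2) = int m}"

lemma ex_fun_with_fibre_cards:
  fixes c :: "'a::finite \<Rightarrow> nat"
  shows "\<exists>f::nat \<Rightarrow> 'a. \<forall>i. card {k\<in>{..<sum c UNIV}. f k = i} = c i"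
proof -
  define A where "A = (SIGMA i:UNIV. {..<c i})"
  have "card A = sum c UNIV"
    unfolding A_def by simp
  then obtain h where h: "bij_betw h {..<sum c UNIV} A"
    using ex_bij_betw_nat_finite[of A] by (auto simp: A_def atLeast0LessThan)
  have "card {k\<in>{..<sum c UNIV}. fst (h k) = i} = c i" for i
  proof -
    have "h ` {k\<in>{..<sum c UNIV}. fst (h k) = i} = A \<inter> {p. fst p = i}"
      using h unfolding bij_betw_def by blast
    also have "\<dots> = {i} \<times> {..<c i}"
      unfolding A_def by auto
    finally have "bij_betw h {k\<in>{..<sum c UNIV}. fst (h k) = i} ({i} \<times> {..<c i})"
      using h unfolding bij_betw_def by (auto intro: inj_on_subset)
    then show ?thesis
      by (simp add: bij_betw_same_card)
  qed
  then show ?thesis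
    by (intro exI[of _ "fst \<circ> h"]) simp
qed

definition sphere_decode :: "nat \<Rightarrow> (nat \<Rightarrow> 'a \<times> bool) \<Rightarrow> 'a \<Rightarrow> int" where
  "sphere_decode m w i =
     (if (i, True) \<in> w ` {..<m} then -1 else 1) * int (floor_sqrt (card {k\<in>{..<m}. fst (w k) = i}))"

lemma int_sphere_subset_image_sphere_decode:
  "int_sphere m \<subseteq> sphere_decode m ` (\<Pi>\<^sub>E k\<in>{..<m}. UNIV)"
proof
  fix v :: "'a \<Rightarrow> int"
  assume "v \<in> int_sphere m"
  then have "int (\<Sum>i\<in>UNIV. nat ((v i)^2)) = int m"
    unfolding int_sphere_def by simp
  then have "(\<Sum>i\<in>UNIV. nat ((v i)^2)) = m"
    by (simp only: of_nat_eq_iff)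
  then obtain f where f: "\<And>i. card {k\<in>{..<m}. f k = i} = nat ((v i)^2)"
    using ex_fun_with_fibre_cards[of "\<lambda>i. nat ((v i)^2)"] by auto
  define w where "w k = (if k < m then (f k, v (f k) < 0) else undefined)" for k
  have "w \<in> (\<Pi>\<^sub>E k\<in>{..<m}. UNIV)"
    unfolding w_def PiE_def extensional_def by auto
  moreover have "sphere_decode m w = v"
  proof
    fix i
    have "{k\<in>{..<m}. fst (w k) = i} = {k\<in>{..<m}. f k = i}"
      by (auto simp: w_def)
    then have "card {k\<in>{..<m}. fst (w k) = i} = (nat \<bar>v i\<bar>)^2"
      using f[of i] by (simp add: nat_power_eq[symmetric])
    moreover have "(i, True) \<in> w ` {..<m} \<longleftrightarrow> v i < 0"
    proof
      assume "v i < 0"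
      then have "card {k\<in>{..<m}. f k = i} \<noteq> 0"
        using f[of i] by simp
      then have "{k\<in>{..<m}. f k = i} \<noteq> {}"
        by (metis card.empty)
      then obtain k where "k < m" "f k = i"
        by auto
      then show "(i, True) \<in> w ` {..<m}"
        using \<open>v i < 0\<close> unfolding w_def by force
    qed (auto simp: w_def)
    ultimately show "sphere_decode m w i = v i"
      unfolding sphere_decode_def by (cases "v i < 0") auto
  qed
  ultimately show "v \<in> sphere_decode m ` (\<Pi>\<^sub>E k\<in>{..<m}. UNIV)"
    by blast
qed

lemma finite_int_sphere: "finite (int_sphere m :: ('a::finite \<Rightarrow> int) set)"
  by (rule finite_subset[OF int_sphere_subset_image_sphere_decode]) (simp add: finite_PiE)

lemma card_int_sphere_le: "card (int_sphere m :: ('a::finite \<Rightarrow> int) set) \<le> (2 * CARD('a))^m"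
proof -
  have "card (int_sphere m :: ('a \<Rightarrow> int) set)
          \<le> card (sphere_decode m ` (\<Pi>\<^sub>E k\<in>{..<m}. (UNIV :: ('a \<times> bool) set)))"
    by (intro card_mono int_sphere_subset_image_sphere_decode) (simp add: finite_PiE)
  also have "\<dots> \<le> card (\<Pi>\<^sub>E k\<in>{..<m}. (UNIV :: ('a \<times> bool) set))"
    by (intro card_image_le) (simp add: finite_PiE)
  also have "\<dots> = (2 * CARD('a))^m"
    by (simp add: card_PiE card_cartesian_product)
  finally show ?thesis .
qed

lemma integral_scale_dvd:
  assumes "k dvd l" and "of_nat k * x \<in> \<int>"
  shows "of_nat l * (x::'a::comm_ring_1) \<in> \<int>"
proof -
  obtain c where "l = k * c"
    using assms(1) by blast
  then have "of_nat l * x = of_nat c * (of_nat k * x)"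
    by (simp add: algebra_simps)
  then show ?thesis
    using assms(2) by (metis Ints_mult Ints_of_nat)
qed

lemma ex_integral_scale: "\<exists>d>0. is_integral_matrix (\<chi> i j. of_nat d * (Q::rat^'n^'n) $ i $ j)"
proof -
  define den where "den x = nat (snd (quotient_of x))" for x
  have den_pos: "0 < den x" for x
    unfolding den_def using quotient_of_denom_pos' by simp
  have den_integral: "of_nat (den x) * x \<in> \<int>" for x
  proof -
    obtain a b where q: "quotient_of x = (a, b)"
      by fastforce
    then have "x = of_int a / of_int b" "0 < b"
      using quotient_of_div quotient_of_denom_pos by blast+
    then show ?thesis
      using q unfolding den_def by simp
  qed
  define D where "D = (\<Prod>p\<in>UNIV. den (Q $ fst p $ snd p))"
  have "of_nat D * Q $ i $ j \<in> \<int>" for i j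
  proof (rule integral_scale_dvd[OF _ den_integral])
    show "den (Q $ i $ j) dvd D"
      unfolding D_def using dvd_prodI[of UNIV "(i, j)" "\<lambda>p. den (Q $ fst p $ snd p)"] by simp
  qed
  moreover have "0 < D"
    unfolding D_def using den_pos by (simp add: prod_pos)
  ultimately show ?thesis
    unfolding is_integral_matrix_def by auto
qed

lemma is_integral_level_scale: "is_integral_matrix (\<chi> i j. of_nat (level Q) * Q $ i $ j)"
  using LeastI_ex[OF ex_integral_scale[of Q]] unfolding level_def by auto

definition orth_scaled_integral :: "nat \<Rightarrow> (rat^'n^'n) set" where
  "orth_scaled_integral l = {Q. rat_orthogonal Q \<and> is_integral_matrix (\<chi> i j. of_nat l * Q $ i $ j)}"

lemma orth_level_set_subset_orth_scaled_integral:
  assumes "d dvd l"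
  shows "orth_level_set d \<subseteq> orth_scaled_integral l"
  using is_integral_level_scale integral_scale_dvd[OF assms]
  unfolding orth_level_set_def orth_scaled_integral_def is_integral_matrix_def by fastforce

lemma rat_orthogonal_column_norm:
  assumes "rat_orthogonal Q"
  shows "(\<Sum>i\<in>UNIV. (Q $ i $ j)^2) = 1"
proof -
  have "(\<Sum>i\<in>UNIV. (Q $ i $ j)^2) = (transpose Q ** Q) $ j $ j"
    by (simp add: matrix_matrix_mult_def transpose_def power2_eq_square)
  then show ?thesis
    using assms unfolding rat_orthogonal_def by (simp add: mat_def)
qed

definition scaled_columns :: "nat \<Rightarrow> rat^'n^'n \<Rightarrow> 'n \<Rightarrow> 'n \<Rightarrow> int" where
  "scaled_columns l Q j i = \<lfloor>of_nat l * Q $ i $ j\<rfloor>"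

lemma scaled_columns_in_int_sphere:
  assumes "Q \<in> orth_scaled_integral l"
  shows "scaled_columns l Q j \<in> int_sphere (l^2)"
proof -
  have "of_int (\<Sum>i\<in>UNIV. (scaled_columns l Q j i)^2) = (\<Sum>i\<in>UNIV. (of_nat l * Q $ i $ j)^2)"
    using assms unfolding orth_scaled_integral_def is_integral_matrix_def scaled_columns_def by simp
  also have "\<dots> = of_nat l ^ 2 * (\<Sum>i\<in>UNIV. (Q $ i $ j)^2)"
    by (simp add: sum_distrib_left power_mult_distrib)
  also have "\<dots> = of_int (int (l^2))"
    using assms rat_orthogonal_column_norm unfolding orth_scaled_integral_def by auto
  finally show ?thesis
    unfolding int_sphere_def by (simp only: of_int_eq_iff mem_Collect_eq)
qed

lemma inj_on_scaled_columns:
  assumes "0 < l"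
  shows "inj_on (scaled_columns l) (orth_scaled_integral l)"
proof
  fix Q R :: "rat^'n^'n"
  assume "Q \<in> orth_scaled_integral l" "R \<in> orth_scaled_integral l"
    and "scaled_columns l Q = scaled_columns l R"
  then have "of_nat l * Q $ i $ j = of_nat l * R $ i $ j" for i j
    unfolding orth_scaled_integral_def is_integral_matrix_def scaled_columns_def
    by (metis (no_types, lifting) mem_Collect_eq of_int_floor vec_lambda_beta)
  then show "Q = R"
    using assms by (simp add: vec_eq_iff)
qed

lemma
  assumes "0 < l"
  shows finite_orth_scaled_integral: "finite (orth_scaled_integral l :: (rat^'n^'n) set)"
    and card_orth_scaled_integral_le:
      "card (orth_scaled_integral l :: (rat^'n^'n) set) \<le> (2 * CARD('n)) ^ (l^2 * CARD('n))"
proof -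
  let ?columns = "\<Pi>\<^sub>E j\<in>(UNIV::'n set). (int_sphere (l^2) :: ('n \<Rightarrow> int) set)"
  have maps_to: "scaled_columns l ` orth_scaled_integral l \<subseteq> ?columns"
    using scaled_columns_in_int_sphere by auto
  have fin: "finite ?columns"
    by (simp add: finite_PiE finite_int_sphere)
  show "finite (orth_scaled_integral l :: (rat^'n^'n) set)"
    using inj_on_finite[OF inj_on_scaled_columns[OF assms] maps_to fin] .
  have "card (orth_scaled_integral l :: (rat^'n^'n) set) \<le> card ?columns"
    using card_inj_on_le[OF inj_on_scaled_columns[OF assms] maps_to fin] .
  also have "\<dots> = card (int_sphere (l^2) :: ('n \<Rightarrow> int) set) ^ CARD('n)"
    by (simp add: card_PiE)
  also have "\<dots> \<le> ((2 * CARD('n)) ^ l^2) ^ CARD('n)"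
    by (intro power_mono card_int_sphere_le) simp
  finally show "card (orth_scaled_integral l :: (rat^'n^'n) set) \<le> (2 * CARD('n)) ^ (l^2 * CARD('n))"
    by (simp add: power_mult)
qed

theorem mainTheorem3:
  fixes l :: nat
  assumes "0 < l"
  shows "(\<Sum>l'\<in>{d. d dvd l}. card (orth_level_set l' :: (rat^'n^'n) set))
           \<le> (2 * CARD('n)) ^ (l^2 * CARD('n))"
proof -
  let ?O = "orth_level_set :: nat \<Rightarrow> (rat^'n^'n) set"
  have levels_in: "(\<Union>d\<in>{d. d dvd l}. ?O d) \<subseteq> orth_scaled_integral l"
    using orth_level_set_subset_orth_scaled_integral by blast
  have fin: "finite (orth_scaled_integral l :: (rat^'n^'n) set)"
    using finite_orth_scaled_integral[OF assms] .
  have "(\<Sum>d\<in>{d. d dvd l}. card (?O d)) = card (\<Union>d\<in>{d. d dvd l}. ?O d)"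
  proof (rule card_UN_disjoint[symmetric])
    show "finite {d. d dvd l}"
      using assms by simp
    show "\<forall>d\<in>{d. d dvd l}. finite (?O d)"
      using levels_in fin by (meson UN_subset_iff finite_subset)
    show "\<forall>d\<in>{d. d dvd l}. \<forall>d'\<in>{d. d dvd l}. d \<noteq> d' \<longrightarrow> ?O d \<inter> ?O d' = {}"
      unfolding orth_level_set_def by auto
  qed
  also have "\<dots> \<le> card (orth_scaled_integral l :: (rat^'n^'n) set)"
    using card_mono[OF fin levels_in] .
  also have "\<dots> \<le> (2 * CARD('n)) ^ (l^2 * CARD('n))"
    using card_orth_scaled_integral_le[OF assms] .
  finally show ?thesis .
qed

end
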